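(* Let $S$ and $A$ be nonempty Borel spaces and $q(dy|x,a)$ a signed kernel as in the context, and suppose that (b) for each bounded continuous $f$ on $S$, $(x,a)\mapsto\int_S f(y)\tilde q(dy|x,a)/q_x(a)$ is continuous on $S\times A$, and (c) $(x,a)\mapsto q_x(a)$ is continuous on $S\times A$. Then: (a) for each lower semicontinuous function $c:S\times A\to[0,\infty]$, the function $(x,a)\mapsto c(x,a)/q_x(a)$ is lower semicontinuous on $S\times A$; and for each bounded continuous function $f$ on $S$, $(x,a)\mapsto\int_S f(y)q(dy|x,a)$ is continuous on $S\times A$; (b) for each lower semicontinuous function $f:S\to[0,\infty]$, the function $(x,a)\mapsto\int_S f(y)\tilde q(dy|x,a)\in[0,\infty]$ is lower semicontinuous on $S\times A$.
   Context: $S$ and $A$ are nonempty Borel spaces (metrizable), and $q(dy|x,a)$ is a signed kernel on $\mathcal B(S)$ given $(x,a)\in S\times A$ such that $\tilde q(\Gamma|x,a):=q(\Gamma\setminus\{x\}|x,a)\ge0$ for all $\Gamma\in\mathcal B(S)$, $q(S|x,a)=0$, and, with $q_x(a):=-q(\{x\}|x,a)\ge0$, $\sup_{a\in A}q_x(a)<\infty$ for each $x\in S$. Conventions: $0/0:=0$, $0\cdot\infty:=0$, $c/0:=+\infty$ for $c>0$. *)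

theory Defs
  imports "HOL-Analysis.Analysis"
begin

definition lsc_on :: "'a topology \<Rightarrow> ('a \<Rightarrow> ennreal) \<Rightarrow> bool" where
  "lsc_on X f \<longleftrightarrow> (\<forall>t. openin X {z \<in> topspace X. t < f z})"

definition signed_kernel ::
  "'s::topological_space set \<Rightarrow> 'b::topological_space set \<Rightarrow> ('s \<Rightarrow> 'b \<Rightarrow> 's set \<Rightarrow> real) \<Rightarrow> bool" where
  "signed_kernel S A q \<longleftrightarrow>
     (\<forall>x\<in>S. \<forall>a\<in>A. q x a {} = 0 \<and>
        (\<forall>F. range F \<subseteq> sets (restrict_space borel S) \<longrightarrow> disjoint_family F \<longrightarrow>
             (\<lambda>n. q x a (F n)) sums q x a (\<Union>n. F n))) \<and>
     (\<forall>\<Gamma>\<in>sets (restrict_space borel S).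
        (\<lambda>(x, a). q x a \<Gamma>) \<in> borel_measurable (restrict_space borel (S \<times> A)))"

definition qx :: "('s \<Rightarrow> 'b \<Rightarrow> 's set \<Rightarrow> real) \<Rightarrow> 's \<Rightarrow> 'b \<Rightarrow> real" where
  "qx q x a = - q x a {x}"

definition qtilde :: "'s::topological_space set \<Rightarrow> ('s \<Rightarrow> 'b \<Rightarrow> 's set \<Rightarrow> real) \<Rightarrow> 's \<Rightarrow> 'b \<Rightarrow> 's measure" where
  "qtilde S q x a = measure_of S (sets (restrict_space borel S)) (\<lambda>\<Gamma>. ennreal (q x a (\<Gamma> - {x})))"

text \<open>Integral of f with respect to the signed measure q(dy|x,a) = tilde q(dy|x,a) - q_x(a) delta_x(dy)
  (its Jordan decomposition).\<close>
definition q_integral ::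
  "'s::topological_space set \<Rightarrow> ('s \<Rightarrow> 'b \<Rightarrow> 's set \<Rightarrow> real) \<Rightarrow> 's \<Rightarrow> 'b \<Rightarrow> ('s \<Rightarrow> real) \<Rightarrow> real" where
  "q_integral S q x a f = (\<integral>y. f y \<partial>(qtilde S q x a)) - qx q x a * f x"

definition ediv :: "ennreal \<Rightarrow> real \<Rightarrow> ennreal" where
  "ediv c r = (if r = 0 then (if c = 0 then 0 else \<infinity>) else c / ennreal r)"

end

theory Submission
  imports Defs
begin

text \<open>By conservativity the measure \<open>qtilde(dy|x,a)\<close> has total mass \<open>q\<^sub>x(a)\<close>, so the integral of a
  bounded continuous \<open>f\<close> against it is \<open>q\<^sub>x(a)\<close> times the quotient of hypothesis (b) (both vanish
  when \<open>q\<^sub>x(a) = 0\<close>) and is therefore continuous in \<open>(x,a)\<close>; this gives the continuity claim.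
  The quotient \<open>c/q\<^sub>x(a)\<close> exceeds \<open>t\<close> iff \<open>t q\<^sub>x(a) < c\<close>, an open condition for lower semicontinuous
  \<open>c\<close> and continuous \<open>q\<^sub>x\<close>. Finally a lower semicontinuous \<open>f \<ge> 0\<close> is the increasing limit of
  bounded Lipschitz functions, so by monotone convergence \<open>\<integral> f d qtilde\<close> is a supremum of continuous
  functions of \<open>(x,a)\<close>, hence lower semicontinuous.\<close>

lemma lsc_on_cong:
  assumes "\<And>z. z \<in> topspace X \<Longrightarrow> f z = g z"
  shows "lsc_on X f \<longleftrightarrow> lsc_on X g"
proof -
  have "{z \<in> topspace X. t < f z} = {z \<in> topspace X. t < g z}" for t
    using assms by auto
  then show ?thesis by (simp add: lsc_on_def)
qed

lemma lsc_on_continuous_map: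
  fixes f :: "'a \<Rightarrow> ennreal"
  assumes "continuous_map X euclidean f"
  shows "lsc_on X f"
  using assms by (simp add: lsc_on_def continuous_map_upper_lower_semicontinuous_lt)

lemma lsc_on_SUP:
  assumes "\<And>i. i \<in> I \<Longrightarrow> lsc_on X (f i)"
  shows "lsc_on X (\<lambda>z. SUP i\<in>I. f i z)"
  unfolding lsc_on_def
proof
  fix t
  have "{z \<in> topspace X. t < (SUP i\<in>I. f i z)} = (\<Union>i\<in>I. {z \<in> topspace X. t < f i z})"
    by (auto simp: less_SUP_iff)
  then show "openin X {z \<in> topspace X. t < (SUP i\<in>I. f i z)}"
    using assms by (auto simp: lsc_on_def)
qed

lemma openin_less_lsc_on:
  assumes c: "lsc_on X c" and g: "continuous_map X euclideanreal g"
  shows "openin X {z \<in> topspace X. ennreal (g z) < c z}"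
proof -
  have "{z \<in> topspace X. ennreal (g z) < c z}
      = (\<Union>v. {z \<in> topspace X. g z < v} \<inter> {z \<in> topspace X. ennreal v < c z})"
  proof (intro equalityI subsetI)
    fix z assume "z \<in> {z \<in> topspace X. ennreal (g z) < c z}"
    then have z: "z \<in> topspace X" "ennreal (g z) < c z" by auto
    then obtain u where u: "ennreal (g z) < u" "u < c z" using dense by blast
    then obtain v where v: "u = ennreal v" by (cases u) auto
    with u have "g z < v" by (metis ennreal_leI not_le)
    with z u v show "z \<in> (\<Union>v. {z \<in> topspace X. g z < v} \<inter> {z \<in> topspace X. ennreal v < c z})"
      by auto
  next
    fix z assume "z \<in> (\<Union>v. {z \<in> topspace X. g z < v} \<inter> {z \<in> topspace X. ennreal v < c z})"
    then obtain v where "z \<in> topspace X" "g z < v" "ennreal v < c z" by auto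
    then show "z \<in> {z \<in> topspace X. ennreal (g z) < c z}"
      by (metis (mono_tags, lifting) ennreal_leI le_less_trans less_imp_le mem_Collect_eq)
  qed
  moreover have "openin X ({z \<in> topspace X. g z < v} \<inter> {z \<in> topspace X. ennreal v < c z})" for v
  proof (rule openin_Int)
    show "openin X {z \<in> topspace X. g z < v}"
      using g by (simp add: continuous_map_upper_lower_semicontinuous_lt)
    show "openin X {z \<in> topspace X. ennreal v < c z}"
      using c by (simp add: lsc_on_def)
  qed
  ultimately show ?thesis
    by (simp only:) (rule openin_Union, blast)
qed

lemma ennreal_less_ediv_iff:
  assumes "0 \<le> s" "0 \<le> r"
  shows "ennreal s < ediv c r \<longleftrightarrow> ennreal (s * r) < c"
proof (cases "r = 0")
  case True
  then show ?thesis by (auto simp: ediv_def zero_less_iff_neq_zero)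
next
  case False
  with assms show ?thesis
    by (cases c) (auto simp: ediv_def divide_ennreal ennreal_less_iff ennreal_top_divide field_simps)
qed

lemma lsc_on_ediv:
  assumes c: "lsc_on X c" and Q: "continuous_map X euclideanreal Q"
    and Q_nonneg: "\<And>z. z \<in> topspace X \<Longrightarrow> 0 \<le> Q z"
  shows "lsc_on X (\<lambda>z. ediv (c z) (Q z))"
  unfolding lsc_on_def
proof
  fix t :: ennreal
  show "openin X {z \<in> topspace X. t < ediv (c z) (Q z)}"
  proof (cases t)
    case (real s)
    then have "{z \<in> topspace X. t < ediv (c z) (Q z)} = {z \<in> topspace X. ennreal (s * Q z) < c z}"
      using Q_nonneg by (auto simp: ennreal_less_ediv_iff)
    then show ?thesis
      using openin_less_lsc_on[OF c continuous_map_real_mult_left[OF Q]] by simp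
  qed simp
qed

text \<open>Infimal convolution of \<open>\<phi>\<close> with \<open>L \<cdot> dist\<close>: for \<open>\<phi> \<ge> 0\<close> it is the largest
  \<open>L\<close>-Lipschitz minorant of \<open>\<phi>\<close> on \<open>S\<close> (Baire's approximation of semicontinuous functions).\<close>
definition inf_convolution :: "'a::metric_space set \<Rightarrow> real \<Rightarrow> ('a \<Rightarrow> real) \<Rightarrow> 'a \<Rightarrow> real" where
  "inf_convolution S L \<phi> x = (INF y\<in>S. \<phi> y + L * dist x y)"

context
  fixes S :: "'a::metric_space set" and \<phi> :: "'a \<Rightarrow> real" and L :: real
  assumes S_ne: "S \<noteq> {}" and \<phi>_nonneg: "\<And>y. y \<in> S \<Longrightarrow> 0 \<le> \<phi> y" and L_nonneg: "0 \<le> L"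
begin

lemma bdd_below_inf_convolution: "bdd_below ((\<lambda>y. \<phi> y + L * dist x y) ` S)"
  by (rule bdd_belowI2[where m=0]) (simp add: \<phi>_nonneg L_nonneg)

lemma inf_convolution_nonneg: "0 \<le> inf_convolution S L \<phi> x"
  unfolding inf_convolution_def using S_ne \<phi>_nonneg L_nonneg by (intro cINF_greatest) auto

lemma inf_convolution_le: "x \<in> S \<Longrightarrow> inf_convolution S L \<phi> x \<le> \<phi> x"
  unfolding inf_convolution_def using cINF_lower[OF bdd_below_inf_convolution, of x x] by simp

lemma inf_convolution_ge:
  assumes "0 < \<delta>" "r \<le> L * \<delta>" "\<And>y. y \<in> S \<Longrightarrow> dist x y < \<delta> \<Longrightarrow> r \<le> \<phi> y"
  shows "r \<le> inf_convolution S L \<phi> x"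
  unfolding inf_convolution_def
proof (rule cINF_greatest[OF S_ne])
  fix y assume y: "y \<in> S"
  show "r \<le> \<phi> y + L * dist x y"
  proof (cases "dist x y < \<delta>")
    case True
    then show ?thesis using assms(3)[OF y] L_nonneg by (simp add: add_increasing2)
  next
    case False
    then have "r \<le> L * dist x y" using assms(2) L_nonneg by (meson mult_left_mono not_less order_trans)
    then show ?thesis using \<phi>_nonneg[OF y] by linarith
  qed
qed

lemma lipschitz_on_inf_convolution: "L-lipschitz_on UNIV (inf_convolution S L \<phi>)"
proof (rule lipschitz_onI)
  have le: "inf_convolution S L \<phi> x \<le> inf_convolution S L \<phi> x' + L * dist x x'" for x x'
  proof -
    have "inf_convolution S L \<phi> x - L * dist x x' \<le> inf_convolution S L \<phi> x'"
      unfolding inf_convolution_def[of S L \<phi> x']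
    proof (rule cINF_greatest[OF S_ne])
      fix y assume y: "y \<in> S"
      have "inf_convolution S L \<phi> x \<le> \<phi> y + L * dist x y"
        unfolding inf_convolution_def using cINF_lower[OF bdd_below_inf_convolution y] .
      also have "\<dots> \<le> \<phi> y + L * (dist x' y + dist x x')"
        using dist_triangle[of x y x'] L_nonneg by (simp add: dist_commute mult_left_mono)
      finally show "inf_convolution S L \<phi> x - L * dist x x' \<le> \<phi> y + L * dist x' y"
        by (simp add: algebra_simps)
    qed
    then show ?thesis by simp
  qed
  fix x x' :: 'a
  show "dist (inf_convolution S L \<phi> x) (inf_convolution S L \<phi> x') \<le> L * dist x x'"
    using le[of x x'] le[of x' x] by (simp add: dist_real_def dist_commute abs_le_iff)
qed (rule L_nonneg)

lemma inf_convolution_mono: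
  assumes "L \<le> L'" "\<And>y. y \<in> S \<Longrightarrow> \<phi> y \<le> \<psi> y"
  shows "inf_convolution S L \<phi> x \<le> inf_convolution S L' \<psi> x"
  unfolding inf_convolution_def
proof (rule cINF_mono[OF S_ne bdd_below_inf_convolution])
  fix y assume "y \<in> S"
  then show "\<exists>y'\<in>S. \<phi> y' + L * dist x y' \<le> \<psi> y + L' * dist x y"
    using assms by (intro bexI[of _ y] add_mono mult_right_mono) auto
qed

end

lemma lsc_on_eq_SUP_continuous:
  fixes f :: "'a::metric_space \<Rightarrow> ennreal"
  assumes S_ne: "S \<noteq> {}" and f: "lsc_on (top_of_set S) f"
  obtains g :: "nat \<Rightarrow> 'a \<Rightarrow> real"
  where "\<And>n. continuous_on S (g n)" "\<And>n y. 0 \<le> g n y"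
    "\<And>n y. y \<in> S \<Longrightarrow> g n y \<le> real n" "\<And>m n y. m \<le> n \<Longrightarrow> y \<in> S \<Longrightarrow> g m y \<le> g n y"
    "\<And>y. y \<in> S \<Longrightarrow> f y = (SUP n. ennreal (g n y))"
proof
  define \<phi> where "\<phi> n y = enn2real (min (of_nat n) (f y))" for n :: nat and y
  have \<phi>_nonneg: "0 \<le> \<phi> n y" for n y
    by (simp add: \<phi>_def)
  have ennreal_\<phi>: "ennreal (\<phi> n y) = min (of_nat n) (f y)" for n y
    unfolding \<phi>_def by (intro ennreal_enn2real min.strict_coboundedI1 of_nat_less_top)
  have \<phi>_le: "\<phi> n y \<le> real n" for n y
    using ennreal_\<phi>[of n y] by (metis ennreal_le_iff ennreal_of_nat_eq_real_of_nat min.cobounded1 of_nat_0_le_iff)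
  have \<phi>_mono: "\<phi> m y \<le> \<phi> n y" if "m \<le> n" for m n y
  proof -
    have "ennreal (\<phi> m y) \<le> ennreal (\<phi> n y)"
      unfolding ennreal_\<phi> using that by (intro min.mono) auto
    then show ?thesis using \<phi>_nonneg by simp
  qed
  define g where "g n = inf_convolution S (real n) (\<phi> n)" for n
  show "continuous_on S (g n)" for n
    unfolding g_def
    by (rule lipschitz_on_continuous_on, rule lipschitz_on_subset[OF lipschitz_on_inf_convolution])
      (use S_ne \<phi>_nonneg in auto)
  show g_nonneg: "0 \<le> g n y" for n y
    unfolding g_def using inf_convolution_nonneg[where \<phi>="\<phi> n", OF S_ne \<phi>_nonneg] by simp
  have g_le_\<phi>: "g n y \<le> \<phi> n y" if "y \<in> S" for n y
    unfolding g_def using inf_convolution_le[where \<phi>="\<phi> n", OF S_ne \<phi>_nonneg _ that] by simp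
  then show "g n y \<le> real n" if "y \<in> S" for n y
    using \<phi>_le that by (meson order_trans)
  show "g m y \<le> g n y" if "m \<le> n" "y \<in> S" for m n y
    unfolding g_def using inf_convolution_mono[where \<phi>="\<phi> m", OF S_ne \<phi>_nonneg _ _ \<phi>_mono] that by simp
  show "f y = (SUP n. ennreal (g n y))" if y: "y \<in> S" for y
  proof (rule antisym)
    show "f y \<le> (SUP n. ennreal (g n y))"
    proof (rule dense_le)
      fix u assume u: "u < f y"
      then obtain r where r: "0 \<le> r" "u = ennreal r" by (cases u) auto
      have "openin (top_of_set S) {z \<in> S. u < f z}"
        using f unfolding lsc_on_def by simp
      with y u obtain \<delta> where \<delta>: "0 < \<delta>" "\<And>z. z \<in> S \<Longrightarrow> dist z y < \<delta> \<Longrightarrow> u < f z"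
        unfolding openin_euclidean_subtopology_iff by blast
      obtain n :: nat where n: "r \<le> real n" "r / \<delta> \<le> real n"
        using real_arch_simple[of "max r (r / \<delta>)"] by auto
      have "r \<le> g n y"
        unfolding g_def
      proof (rule inf_convolution_ge[where \<phi>="\<phi> n", OF S_ne \<phi>_nonneg _ \<delta>(1)])
        show "r \<le> real n * \<delta>" using n(2) \<delta>(1) by (simp add: divide_le_eq)
        fix z assume "z \<in> S" "dist y z < \<delta>"
        then have "ennreal r \<le> min (of_nat n) (f z)"
          using \<delta>(2) n(1) r by (simp add: dist_commute ennreal_of_nat_eq_real_of_nat less_imp_le)
        then show "r \<le> \<phi> n z" by (simp add: ennreal_\<phi>[symmetric] \<phi>_nonneg)
      qed simp
      then have "u \<le> ennreal (g n y)" using r by simp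
      also have "\<dots> \<le> (SUP n. ennreal (g n y))" by (rule SUP_upper) simp
      finally show "u \<le> (SUP n. ennreal (g n y))" .
    qed
    show "(SUP n. ennreal (g n y)) \<le> f y"
    proof (rule SUP_least)
      fix n
      have "ennreal (g n y) \<le> ennreal (\<phi> n y)" using g_le_\<phi>[OF y] by (rule ennreal_leI)
      then show "ennreal (g n y) \<le> f y" by (simp add: ennreal_\<phi>)
    qed
  qed
qed

lemma lsc_on_nn_integral:
  fixes S :: "'s::metric_space set" and M :: "'z \<Rightarrow> 's measure"
  assumes S_ne: "S \<noteq> {}" and f: "lsc_on (top_of_set S) f"
    and M_sets: "\<And>z. z \<in> topspace X \<Longrightarrow> sets (M z) = sets (restrict_space borel S)"
    and M_finite: "\<And>z. z \<in> topspace X \<Longrightarrow> finite_measure (M z)"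
    and M_cont: "\<And>g. continuous_on S g \<Longrightarrow> bounded (g ` S) \<Longrightarrow>
                   continuous_map X euclideanreal (\<lambda>z. \<integral>y. g y \<partial>M z)"
  shows "lsc_on X (\<lambda>z. \<integral>\<^sup>+y. f y \<partial>M z)"
proof -
  obtain g :: "nat \<Rightarrow> 's \<Rightarrow> real" where g_cont: "\<And>n. continuous_on S (g n)"
    and g_nonneg: "\<And>n y. 0 \<le> g n y" and g_le: "\<And>n y. y \<in> S \<Longrightarrow> g n y \<le> real n"
    and g_mono: "\<And>m n y. m \<le> n \<Longrightarrow> y \<in> S \<Longrightarrow> g m y \<le> g n y"
    and f_eq: "\<And>y. y \<in> S \<Longrightarrow> f y = (SUP n. ennreal (g n y))"
    using lsc_on_eq_SUP_continuous[OF S_ne f] by blast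
  have nn_integral_eq: "(\<integral>\<^sup>+y. f y \<partial>M z) = (SUP n. ennreal (\<integral>y. g n y \<partial>M z))"
    if z: "z \<in> topspace X" for z
  proof -
    interpret finite_measure "M z" using M_finite[OF z] .
    have space_M: "space (M z) = S"
      using sets_eq_imp_space_eq[OF M_sets[OF z]] by (simp add: space_restrict_space)
    have g_meas: "g n \<in> borel_measurable (M z)" for n
      using borel_measurable_continuous_on_restrict[OF g_cont]
      by (simp add: measurable_cong_sets[OF M_sets[OF z] refl])
    have "(\<integral>\<^sup>+y. f y \<partial>M z) = (\<integral>\<^sup>+y. (SUP n. ennreal (g n y)) \<partial>M z)"
      by (rule nn_integral_cong) (simp add: space_M f_eq)
    also have "\<dots> = (SUP n. \<integral>\<^sup>+y. ennreal (g n y) \<partial>M z)"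
      using g_meas g_mono
      by (intro nn_integral_monotone_convergence_SUP_AE AE_I2)
        (auto simp: space_M intro!: ennreal_leI)
    also have "\<dots> = (SUP n. ennreal (\<integral>y. g n y \<partial>M z))"
    proof (intro SUP_cong refl nn_integral_eq_integral)
      fix n
      show "integrable (M z) (g n)"
        using g_meas g_nonneg g_le by (intro integrable_const_bound[where B="real n"]) (auto simp: space_M)
    qed (simp add: g_nonneg)
    finally show ?thesis .
  qed
  have "lsc_on X (\<lambda>z. SUP n. ennreal (\<integral>y. g n y \<partial>M z))"
  proof (intro lsc_on_SUP lsc_on_continuous_map)
    fix n
    have g_bounded: "bounded (g n ` S)"
      unfolding bounded_real using g_nonneg g_le by (intro exI[of _ "real n"]) auto
    have "continuous_map euclideanreal euclidean ennreal"
      using continuous_on_ennreal[OF continuous_on_id] by (simp add: id_def)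
    from continuous_map_compose[OF M_cont[OF g_cont g_bounded] this]
    show "continuous_map X euclidean (\<lambda>z. ennreal (\<integral>y. g n y \<partial>M z))"
      unfolding o_def .
  qed
  then show ?thesis
    by (subst lsc_on_cong[OF nn_integral_eq])
qed

lemma sets_qtilde [simp]: "sets (qtilde S q x a) = sets (restrict_space borel S)"
  and space_qtilde [simp]: "space (qtilde S q x a) = S"
proof -
  have "sets (restrict_space borel S) \<subseteq> Pow S"
    using sets.space_closed[of "restrict_space borel S"] by (simp add: space_restrict_space)
  then show "sets (qtilde S q x a) = sets (restrict_space borel S)" "space (qtilde S q x a) = S"
    unfolding qtilde_def
    by (simp_all add: space_measure_of_conv
        sets.sigma_sets_eq[of "restrict_space borel S", simplified space_restrict_space, simplified])
qed

lemma singleton_in_sets_restrict_borel: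
  fixes S :: "'s::t1_space set"
  assumes "x \<in> S"
  shows "{x} \<in> sets (restrict_space borel S)"
  unfolding sets_restrict_space using assms by (intro image_eqI[of _ _ "{x}"]) auto

locale conservative_kernel =
  fixes S :: "'s::t1_space set" and A :: "'b::topological_space set"
    and q :: "'s \<Rightarrow> 'b \<Rightarrow> 's set \<Rightarrow> real"
  assumes S_borel: "S \<in> sets borel"
    and kernel: "signed_kernel S A q"
    and tilde_nonneg: "\<And>x a \<Gamma>. x \<in> S \<Longrightarrow> a \<in> A \<Longrightarrow> \<Gamma> \<in> sets (restrict_space borel S)
                         \<Longrightarrow> q x a (\<Gamma> - {x}) \<ge> 0"
    and conservative: "\<And>x a. x \<in> S \<Longrightarrow> a \<in> A \<Longrightarrow> q x a S = 0"
begin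

lemma q_sums:
  assumes "x \<in> S" "a \<in> A" "range F \<subseteq> sets (restrict_space borel S)" "disjoint_family F"
  shows "(\<lambda>n. q x a (F n)) sums q x a (\<Union>n. F n)"
  using kernel assms unfolding signed_kernel_def by blast

lemma q_empty: "x \<in> S \<Longrightarrow> a \<in> A \<Longrightarrow> q x a {} = 0"
  using kernel unfolding signed_kernel_def by blast

lemma q_Un:
  assumes xa: "x \<in> S" "a \<in> A" and B: "B \<in> sets (restrict_space borel S)"
    and C: "C \<in> sets (restrict_space borel S)" and disj: "B \<inter> C = {}"
  shows "q x a (B \<union> C) = q x a B + q x a C"
proof -
  define F where "F n = (if n = 0 then B else if n = 1 then C else {})" for n :: nat
  have "(\<lambda>n. q x a (F n)) sums q x a (\<Union>n. F n)"
    using B C disj by (intro q_sums[OF xa]) (auto simp: F_def disjoint_family_on_def)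
  moreover have "(\<Union>n. F n) = B \<union> C"
    by (auto simp: F_def split: if_splits)
  moreover have "(\<lambda>n. q x a (F n)) sums (\<Sum>n\<in>{0, 1}. q x a (F n))"
    by (rule sums_finite) (auto simp: F_def q_empty[OF xa])
  ultimately show ?thesis
    by (simp add: F_def sums_unique2)
qed

lemma qx_eq_q_punctured: "x \<in> S \<Longrightarrow> a \<in> A \<Longrightarrow> qx q x a = q x a (S - {x})"
  using q_Un[of x a "S - {x}" "{x}"] conservative[of x a] S_borel
  by (simp add: qx_def singleton_in_sets_restrict_borel sets_restrict_space_iff insert_absorb)

lemma emeasure_qtilde:
  assumes xa: "x \<in> S" "a \<in> A" and \<Gamma>: "\<Gamma> \<in> sets (restrict_space borel S)"
  shows "emeasure (qtilde S q x a) \<Gamma> = ennreal (q x a (\<Gamma> - {x}))"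
  unfolding qtilde_def
proof (rule emeasure_measure_of_sigma)
  show "sigma_algebra S (sets (restrict_space borel S))"
    using sets.sigma_algebra_axioms[of "restrict_space borel S"] by (simp add: space_restrict_space)
  show "positive (sets (restrict_space borel S)) (\<lambda>\<Gamma>. ennreal (q x a (\<Gamma> - {x})))"
    by (simp add: positive_def q_empty[OF xa])
  show "countably_additive (sets (restrict_space borel S)) (\<lambda>\<Gamma>. ennreal (q x a (\<Gamma> - {x})))"
    unfolding countably_additive_def
  proof (intro allI impI)
    fix F :: "nat \<Rightarrow> 's set"
    assume F: "range F \<subseteq> sets (restrict_space borel S)" "disjoint_family F"
    have "(\<lambda>n. q x a (F n - {x})) sums q x a (\<Union>n. F n - {x})"
      using F singleton_in_sets_restrict_borel[OF xa(1)]
      by (intro q_sums[OF xa]) (auto simp: disjoint_family_on_def)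
    moreover have "(\<Union>n. F n - {x}) = (\<Union>n. F n) - {x}" by auto
    ultimately show "(\<Sum>n. ennreal (q x a (F n - {x}))) = ennreal (q x a ((\<Union>n. F n) - {x}))"
      using F tilde_nonneg[OF xa] by (intro suminf_ennreal_eq) auto
  qed
qed (rule \<Gamma>)

lemma emeasure_qtilde_space: "x \<in> S \<Longrightarrow> a \<in> A \<Longrightarrow> emeasure (qtilde S q x a) S = ennreal (qx q x a)"
  using S_borel by (simp add: emeasure_qtilde qx_eq_q_punctured sets_restrict_space_iff)

lemma qx_nonneg: "x \<in> S \<Longrightarrow> a \<in> A \<Longrightarrow> 0 \<le> qx q x a"
  using S_borel tilde_nonneg[of x a S] by (simp add: qx_eq_q_punctured sets_restrict_space_iff)

lemma finite_measure_qtilde: "x \<in> S \<Longrightarrow> a \<in> A \<Longrightarrow> finite_measure (qtilde S q x a)"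
  by (rule finite_measureI) (simp add: emeasure_qtilde_space)

lemma integral_qtilde_eq_0:
  assumes xa: "x \<in> S" "a \<in> A" and qx_0: "qx q x a = 0"
  shows "(\<integral>y. f y \<partial>qtilde S q x a) = 0"
proof -
  have "S \<in> null_sets (qtilde S q x a)"
    using emeasure_qtilde_space[OF xa] qx_0 S_borel by (simp add: null_sets_def sets_restrict_space_iff)
  then have "AE y in qtilde S q x a. f y = 0"
    by (rule AE_I') auto
  then show ?thesis by (rule integral_eq_zero_AE)
qed

text \<open>Dividing by \<open>q\<^sub>x(a)\<close> loses nothing: where \<open>q\<^sub>x(a) = 0\<close> the measure \<open>qtilde\<close> vanishes.\<close>
lemma continuous_on_integral_qtilde:
  assumes "continuous_on (S \<times> A) (\<lambda>(x, a). qx q x a)"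
    and "continuous_on (S \<times> A) (\<lambda>(x, a). (\<integral>y. f y \<partial>qtilde S q x a) / qx q x a)"
  shows "continuous_on (S \<times> A) (\<lambda>(x, a). \<integral>y. f y \<partial>qtilde S q x a)"
proof (rule continuous_on_eq)
  show "continuous_on (S \<times> A) (\<lambda>(x, a). qx q x a * ((\<integral>y. f y \<partial>qtilde S q x a) / qx q x a))"
    using continuous_on_mult[OF assms] by (simp add: case_prod_unfold)
qed (auto simp: integral_qtilde_eq_0)

lemma continuous_on_q_integral:
  assumes "continuous_on (S \<times> A) (\<lambda>(x, a). qx q x a)"
    and "continuous_on (S \<times> A) (\<lambda>(x, a). \<integral>y. f y \<partial>qtilde S q x a)"
    and "continuous_on S f"
  shows "continuous_on (S \<times> A) (\<lambda>(x, a). q_integral S q x a f)"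
proof -
  have "continuous_on (S \<times> A) (\<lambda>z. f (fst z))"
    using assms(3) by (intro continuous_on_compose2[of S f _ fst] continuous_intros) auto
  then show ?thesis
    using assms(1,2) unfolding q_integral_def case_prod_unfold
    by (intro continuous_on_diff continuous_on_mult)
qed

end

theorem lemmaA1:
  fixes S :: "'s::polish_space set" and A :: "'b::polish_space set"
    and q :: "'s \<Rightarrow> 'b \<Rightarrow> 's set \<Rightarrow> real"
  assumes S_borel: "S \<in> sets borel" and S_ne: "S \<noteq> {}"
    and A_borel: "A \<in> sets borel" and A_ne: "A \<noteq> {}"
    and kernel: "signed_kernel S A q"
    and tilde_nonneg: "\<And>x a \<Gamma>. x \<in> S \<Longrightarrow> a \<in> A \<Longrightarrow> \<Gamma> \<in> sets (restrict_space borel S)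
                         \<Longrightarrow> q x a (\<Gamma> - {x}) \<ge> 0"
    and conservative: "\<And>x a. x \<in> S \<Longrightarrow> a \<in> A \<Longrightarrow> q x a S = 0"
    and stable: "\<And>x. x \<in> S \<Longrightarrow> bdd_above ((\<lambda>a. qx q x a) ` A)"
    and hyp_b: "\<And>f :: 's \<Rightarrow> real. continuous_on S f \<Longrightarrow> bounded (f ` S) \<Longrightarrow>
                  continuous_on (S \<times> A)
                    (\<lambda>(x, a). (\<integral>y. f y \<partial>(qtilde S q x a)) / qx q x a)"
    and hyp_c: "continuous_on (S \<times> A) (\<lambda>(x, a). qx q x a)"
  shows "(\<forall>c :: 's \<times> 'b \<Rightarrow> ennreal. lsc_on (top_of_set (S \<times> A)) c \<longrightarrow>
            lsc_on (top_of_set (S \<times> A)) (\<lambda>(x, a). ediv (c (x, a)) (qx q x a)))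
       \<and> (\<forall>f :: 's \<Rightarrow> real. continuous_on S f \<and> bounded (f ` S) \<longrightarrow>
            continuous_on (S \<times> A) (\<lambda>(x, a). q_integral S q x a f))
       \<and> (\<forall>f :: 's \<Rightarrow> ennreal. lsc_on (top_of_set S) f \<longrightarrow>
            lsc_on (top_of_set (S \<times> A)) (\<lambda>(x, a). \<integral>\<^sup>+ y. f y \<partial>(qtilde S q x a)))"
proof -
  interpret conservative_kernel S A q
    using S_borel kernel tilde_nonneg conservative by unfold_locales
  have integral_cont: "continuous_on (S \<times> A) (\<lambda>(x, a). \<integral>y. f y \<partial>qtilde S q x a)"
    if "continuous_on S f" "bounded (f ` S)" for f :: "'s \<Rightarrow> real"
    using continuous_on_integral_qtilde[OF hyp_c hyp_b[OF that]] .
  show ?thesis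
  proof (intro conjI allI impI)
    show "lsc_on (top_of_set (S \<times> A)) (\<lambda>(x, a). ediv (c (x, a)) (qx q x a))"
      if "lsc_on (top_of_set (S \<times> A)) c" for c
      using lsc_on_ediv[OF that, of "\<lambda>(x, a). qx q x a"] hyp_c qx_nonneg
      by (auto simp: case_prod_unfold)
    show "continuous_on (S \<times> A) (\<lambda>(x, a). q_integral S q x a f)"
      if "continuous_on S f \<and> bounded (f ` S)" for f
      using that integral_cont hyp_c by (intro continuous_on_q_integral) auto
    show "lsc_on (top_of_set (S \<times> A)) (\<lambda>(x, a). \<integral>\<^sup>+y. f y \<partial>qtilde S q x a)"
      if "lsc_on (top_of_set S) f" for f
    proof -
      have "lsc_on (top_of_set (S \<times> A)) (\<lambda>z. \<integral>\<^sup>+y. f y \<partial>case_prod (qtilde S q) z)"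
      proof (rule lsc_on_nn_integral[OF S_ne that])
        show "finite_measure (case_prod (qtilde S q) z)" if "z \<in> topspace (top_of_set (S \<times> A))" for z
          using that finite_measure_qtilde by (cases z) simp
      qed (use integral_cont in \<open>simp_all add: split_beta\<close>)
      then show ?thesis by (simp add: case_prod_unfold)
    qed
  qed
qed

end
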